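(* Let $k\ge 0$ and let $\mathcal{M}$ be a uniform oriented matroid of rank $r\ge 2$ on $n=r+k$ elements (i.e. of corank $k$). Then $$\operatorname{diam}(G^*(\mathcal{M}))\le \max\{\operatorname{diam}(G^*(\mathcal{M}')) : \mathcal{M}' \text{ a uniform oriented matroid of rank } r' \text{ on } r'+k \text{ elements},\ 2\le r'\le k+2\}.$$
   Context: Sign vectors: for a finite set $E$ and $X\in\{+,-,0\}^E$, write $X^+=\{e:X_e=+\}$, $X^-=\{e:X_e=-\}$, $X^0=\{e:X_e=0\}$, $\operatorname{supp}(X)=X^+\cup X^-$, and $-X$ for the componentwise negation. For sign vectors $X,Y$, the separating set is $S(X,Y)=(X^+\cap Y^-)\cup(X^-\cap Y^+)$, and the composition $X\circ Y$ is given by $(X\circ Y)_e=X_e$ if $X_e\neq 0$ and $(X\circ Y)_e=Y_e$ otherwise. An oriented matroid $\mathcal{M}=(E,\mathcal{C}^* )$ is a finite set $E$ together with a set $\mathcal{C}^*\subseteq\{+,-,0\}^E$ of (signed) cocircuits satisfying: (CC0) $\mathbf{0}\notin\mathcal{C}^*$; (CC1) $X\in\mathcal{C}^*\Rightarrow -X\in\mathcal{C}^*$; (CC2) if $X,Y\in\mathcal{C}^*$ and $\operatorname{supp}(X)\subseteq\operatorname{supp}(Y)$ then $X=\pm Y$; (CC3) if $X,Y\in\mathcal{C}^*$, $X\neq -Y$ and $e\in S(X,Y)$, then there is $Z\in\mathcal{C}^*$ with $Z^+\subseteq (X^+\cup Y^+)\setminus\{e\}$ and $Z^-\subseteq (X^-\cup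 Y^-)\setminus\{e\}$. The covectors of $\mathcal{M}$ are $\mathbf{0}$ together with all compositions $X^1\circ\cdots\circ X^k$ ($k\ge 1$) of cocircuits, partially ordered componentwise by $0<+$ and $0<-$ ($+,-$ incomparable). The rank $r$ of $\mathcal{M}$ is the largest $k$ such that there is a chain $\mathbf{0}=V_0<V_1<\cdots<V_k$ of covectors; the corank is $|E|-r$. $\mathcal{M}$ is uniform if $|X^0|=r-1$ for every cocircuit $X$. The cocircuit graph $G^*(\mathcal{M})$ has the cocircuits as vertices, with distinct cocircuits $X,Y$ adjacent iff $|X^0\cap Y^0|\ge r-2$ and $S(X,Y)=\emptyset$. $\operatorname{diam}(G^*(\mathcal{M}))$ is the maximum graph distance between two cocircuits. *)

theory Defs
  imports Main "HOL-Library.Extended_Nat"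
begin

datatype sign = Pos | Neg | Zero

type_synonym 'a signvec = "'a \<Rightarrow> sign"

definition signvecs :: "'a set \<Rightarrow> 'a signvec set" where
  "signvecs E = {X. \<forall>e. e \<notin> E \<longrightarrow> X e = Zero}"

definition zerovec :: "'a signvec" where
  "zerovec = (\<lambda>e. Zero)"

fun neg_sign :: "sign \<Rightarrow> sign" where
  "neg_sign Pos = Neg" | "neg_sign Neg = Pos" | "neg_sign Zero = Zero"

definition negv :: "'a signvec \<Rightarrow> 'a signvec" where
  "negv X = (\<lambda>e. neg_sign (X e))"

definition pos_part :: "'a signvec \<Rightarrow> 'a set" where
  "pos_part X = {e. X e = Pos}"

definition neg_part :: "'a signvec \<Rightarrow> 'a set" where
  "neg_part X = {e. X e = Neg}"

definition zero_part :: "'a set \<Rightarrow> 'a signvec \<Rightarrow> 'a set" where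
  "zero_part E X = {e \<in> E. X e = Zero}"

definition supp :: "'a signvec \<Rightarrow> 'a set" where
  "supp X = pos_part X \<union> neg_part X"

definition sep :: "'a signvec \<Rightarrow> 'a signvec \<Rightarrow> 'a set" where
  "sep X Y = (pos_part X \<inter> neg_part Y) \<union> (neg_part X \<inter> pos_part Y)"

definition comp :: "'a signvec \<Rightarrow> 'a signvec \<Rightarrow> 'a signvec" where
  "comp X Y = (\<lambda>e. if X e \<noteq> Zero then X e else Y e)"

text \<open>Cocircuit axioms (CC0)-(CC3) on ground set E.\<close>
definition oriented_matroid :: "'a set \<Rightarrow> 'a signvec set \<Rightarrow> bool" where
  "oriented_matroid E C \<longleftrightarrow>
     finite E \<and> C \<subseteq> signvecs E \<and>
     zerovec \<notin> C \<and>
     (\<forall>X\<in>C. negv X \<in> C) \<and>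
     (\<forall>X\<in>C. \<forall>Y\<in>C. supp X \<subseteq> supp Y \<longrightarrow> X = Y \<or> X = negv Y) \<and>
     (\<forall>X\<in>C. \<forall>Y\<in>C. \<forall>e. X \<noteq> negv Y \<and> e \<in> sep X Y \<longrightarrow>
        (\<exists>Z\<in>C. pos_part Z \<subseteq> (pos_part X \<union> pos_part Y) - {e} \<and>
                neg_part Z \<subseteq> (neg_part X \<union> neg_part Y) - {e}))"

definition covectors :: "'a signvec set \<Rightarrow> 'a signvec set" where
  "covectors C = insert zerovec
     {foldr comp Xs zerovec | Xs. Xs \<noteq> [] \<and> set Xs \<subseteq> C}"

definition sv_le :: "'a signvec \<Rightarrow> 'a signvec \<Rightarrow> bool" where
  "sv_le X Y \<longleftrightarrow> (\<forall>e. X e = Zero \<or> X e = Y e)"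

definition sv_less :: "'a signvec \<Rightarrow> 'a signvec \<Rightarrow> bool" where
  "sv_less X Y \<longleftrightarrow> sv_le X Y \<and> X \<noteq> Y"

definition om_rank :: "'a signvec set \<Rightarrow> nat" where
  "om_rank C = (GREATEST k. \<exists>V :: nat \<Rightarrow> 'a signvec.
      V 0 = zerovec \<and> (\<forall>i\<le>k. V i \<in> covectors C) \<and>
      (\<forall>i<k. sv_less (V i) (V (Suc i))))"

definition uniform_om :: "'a set \<Rightarrow> 'a signvec set \<Rightarrow> bool" where
  "uniform_om E C \<longleftrightarrow> (\<forall>X\<in>C. card (zero_part E X) = om_rank C - 1)"

definition cg_adj :: "'a set \<Rightarrow> 'a signvec set \<Rightarrow> 'a signvec \<Rightarrow> 'a signvec \<Rightarrow> bool" where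
  "cg_adj E C X Y \<longleftrightarrow> X \<in> C \<and> Y \<in> C \<and> X \<noteq> Y \<and>
     card (zero_part E X \<inter> zero_part E Y) \<ge> om_rank C - 2 \<and> sep X Y = {}"

definition cg_walk :: "'a set \<Rightarrow> 'a signvec set \<Rightarrow> nat \<Rightarrow> 'a signvec \<Rightarrow> 'a signvec \<Rightarrow> bool" where
  "cg_walk E C n X Y \<longleftrightarrow> (\<exists>p :: nat \<Rightarrow> 'a signvec.
      p 0 = X \<and> p n = Y \<and> (\<forall>i\<le>n. p i \<in> C) \<and> (\<forall>i<n. cg_adj E C (p i) (p (Suc i))))"

text \<open>Graph distance (infinity if no walk exists) and diameter, valued in enat.\<close>
definition cg_dist :: "'a set \<Rightarrow> 'a signvec set \<Rightarrow> 'a signvec \<Rightarrow> 'a signvec \<Rightarrow> enat" where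
  "cg_dist E C X Y = (INF n \<in> {n. cg_walk E C n X Y}. enat n)"

definition cg_diam :: "'a set \<Rightarrow> 'a signvec set \<Rightarrow> enat" where
  "cg_diam E C = (SUP X \<in> C. SUP Y \<in> C. cg_dist E C X Y)"

end

theory Submission
  imports Defs
begin

text \<open>If \<open>r > k + 2\<close>, the zero sets of two cocircuits (each of size \<open>r - 1\<close>) meet, since
  \<open>2 (r - 1) > r + k = |E|\<close>. Contracting a common zero \<open>e\<close> gives a uniform oriented matroid of
  rank \<open>r - 1\<close> and the same corank, whose cocircuits are the cocircuits of \<open>M\<close> vanishing at \<open>e\<close>
  and whose adjacency implies adjacency in \<open>G\<^sup>*(M)\<close>. So every distance in \<open>G\<^sup>*(M)\<close> is bounded
  by the diameter of a contraction, and induction on \<open>r\<close> reduces to \<open>r \<le> k + 2\<close>.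
  The rank of the contraction is computed from the fact that in a uniform oriented matroid of
  rank \<open>r\<close> every \<open>(r - 1)\<close>-subset of \<open>E\<close> is the zero set of a cocircuit, which follows by
  induction on \<open>r\<close> from cocircuit elimination.\<close>

lemma supp_iff: "x \<in> supp X \<longleftrightarrow> X x \<noteq> Zero"
  by (cases "X x") (auto simp: supp_def pos_part_def neg_part_def)

lemma Zero_iff_notin_parts: "X x = Zero \<longleftrightarrow> x \<notin> pos_part X \<and> x \<notin> neg_part X"
  using supp_iff[of x X] by (auto simp: supp_def)

lemma sep_iff: "x \<in> sep X Y \<longleftrightarrow> (X x = Pos \<and> Y x = Neg) \<or> (X x = Neg \<and> Y x = Pos)"
  by (auto simp: sep_def pos_part_def neg_part_def)

lemma negv_eq_Zero_iff [simp]: "negv X x = Zero \<longleftrightarrow> X x = Zero"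
  by (cases "X x") (auto simp: negv_def)

lemma finite_zero_part: "finite E \<Longrightarrow> finite (zero_part E X)"
  by (simp add: zero_part_def)

lemma zero_part_Diff_singleton: "zero_part (E - {e}) X = zero_part E X - {e}"
  by (auto simp: zero_part_def)

lemma comp_zerovec_left [simp]: "comp zerovec Y = Y"
  by (auto simp: comp_def zerovec_def)

lemma comp_zerovec_right [simp]: "comp X zerovec = X"
  by (auto simp: comp_def zerovec_def)

lemma comp_assoc: "comp (comp X Y) Z = comp X (comp Y Z)"
  by (auto simp: comp_def)

lemma foldr_comp_eq_comp: "foldr comp Xs Y = comp (foldr comp Xs zerovec) Y"
  by (induction Xs) (simp_all add: comp_assoc)

lemma foldr_comp_Zero_imp: "X \<in> set Xs \<Longrightarrow> foldr comp Xs zerovec x = Zero \<Longrightarrow> X x = Zero"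
proof (induction Xs)
  case (Cons Y Xs) then show ?case by (cases "Y x = Zero") (auto simp: comp_def)
qed simp

lemma foldr_comp_nonzero_imp: "foldr comp Xs zerovec x \<noteq> Zero \<Longrightarrow> \<exists>X\<in>set Xs. X x \<noteq> Zero"
proof (induction Xs)
  case (Cons Y Xs) then show ?case by (cases "Y x = Zero") (auto simp: comp_def)
qed (simp add: zerovec_def)

lemma zerovec_in_covectors: "zerovec \<in> covectors C"
  by (simp add: covectors_def)

lemma covectors_comp_cocircuit:
  assumes "V \<in> covectors C" "X \<in> C"
  shows "comp V X \<in> covectors C"
proof (cases "V = zerovec")
  case True
  then show ?thesis using assms(2) by (auto simp: covectors_def intro!: exI[of _ "[X]"])
next
  case False
  then obtain Xs where Xs: "V = foldr comp Xs zerovec" "Xs \<noteq> []" "set Xs \<subseteq> C"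
    using assms(1) by (auto simp: covectors_def)
  have "comp V X = foldr comp (Xs @ [X]) zerovec"
    by (simp add: Xs(1) foldr_comp_eq_comp[of Xs X])
  then have "\<exists>Ys. comp V X = foldr comp Ys zerovec \<and> Ys \<noteq> [] \<and> set Ys \<subseteq> C"
    using Xs(3) assms(2) by (intro exI[of _ "Xs @ [X]"]) auto
  then show ?thesis unfolding covectors_def by simp
qed

lemma covectors_subset_signvecs:
  assumes "C \<subseteq> signvecs E"
  shows "covectors C \<subseteq> signvecs E"
proof -
  have "set Xs \<subseteq> C \<Longrightarrow> foldr comp Xs zerovec \<in> signvecs E" for Xs
    using assms by (induction Xs) (auto simp: signvecs_def zerovec_def comp_def)
  then show ?thesis by (auto simp: covectors_def signvecs_def zerovec_def)
qed

lemma covector_zeros_in_cocircuit: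
  assumes "V \<in> covectors C" "V \<noteq> zerovec"
  shows "\<exists>X\<in>C. \<forall>x. V x = Zero \<longrightarrow> X x = Zero"
proof -
  obtain X Xs where "V = foldr comp (X # Xs) zerovec" "set (X # Xs) \<subseteq> C"
    using assms by (auto simp: covectors_def neq_Nil_conv)
  then show ?thesis using foldr_comp_Zero_imp[of X "X # Xs"] by auto
qed

lemma covector_nonzero_cocircuit:
  assumes "V \<in> covectors C" "V x \<noteq> Zero"
  shows "\<exists>X\<in>C. X x \<noteq> Zero"
proof -
  obtain Xs where "V = foldr comp Xs zerovec" "set Xs \<subseteq> C"
    using assms by (auto simp: covectors_def zerovec_def)
  then show ?thesis using foldr_comp_nonzero_imp[of Xs x] assms(2) by blast
qed

lemma oriented_matroidD:
  assumes "oriented_matroid E C"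
  shows "finite E" "C \<subseteq> signvecs E" "zerovec \<notin> C" "\<And>X. X \<in> C \<Longrightarrow> negv X \<in> C"
    "\<And>X Y. X \<in> C \<Longrightarrow> Y \<in> C \<Longrightarrow> supp X \<subseteq> supp Y \<Longrightarrow> X = Y \<or> X = negv Y"
    "\<And>X Y e. X \<in> C \<Longrightarrow> Y \<in> C \<Longrightarrow> X \<noteq> negv Y \<Longrightarrow> e \<in> sep X Y \<Longrightarrow>
        \<exists>Z\<in>C. pos_part Z \<subseteq> (pos_part X \<union> pos_part Y) - {e} \<and>
               neg_part Z \<subseteq> (neg_part X \<union> neg_part Y) - {e}"
  using assms unfolding oriented_matroid_def by blast+

section \<open>Chains of covectors and the rank\<close>

definition covector_chain :: "'a signvec set \<Rightarrow> nat \<Rightarrow> (nat \<Rightarrow> 'a signvec) \<Rightarrow> bool" where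
  "covector_chain C k V \<longleftrightarrow> V 0 = zerovec \<and> (\<forall>i\<le>k. V i \<in> covectors C) \<and>
      (\<forall>i<k. sv_less (V i) (V (Suc i)))"

lemma om_rank_eq_Greatest_chain: "om_rank C = (GREATEST k. \<exists>V. covector_chain C k V)"
  unfolding om_rank_def covector_chain_def by simp

lemma covector_chain_zerovec: "covector_chain C 0 (\<lambda>_. zerovec)"
  by (simp add: covector_chain_def zerovec_in_covectors)

lemma covector_chain_prefix: "covector_chain C m V \<Longrightarrow> j \<le> m \<Longrightarrow> covector_chain C j V"
  unfolding covector_chain_def by (meson le_trans less_le_trans)

lemma covector_chain_extend:
  assumes "covector_chain C m V" "U \<in> covectors C" "sv_less (V m) U"
  shows "covector_chain C (Suc m) (V(Suc m := U))"
  using assms unfolding covector_chain_def by (auto simp: le_Suc_eq less_Suc_eq)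

lemma sv_less_comp:
  assumes "X x = Zero" "Y x \<noteq> Zero"
  shows "sv_less X (comp X Y)"
proof -
  have "comp X Y x \<noteq> X x" using assms by (simp add: comp_def)
  then have "X \<noteq> comp X Y" by metis
  then show ?thesis by (simp add: sv_less_def sv_le_def comp_def)
qed

lemma covector_chain_Zero_mono:
  assumes "covector_chain C m V" "j \<le> m" "V j x = Zero" "i \<le> j"
  shows "V i x = Zero"
  using assms(2-4)
proof (induction j)
  case (Suc j)
  have "sv_less (V j) (V (Suc j))" using assms(1) Suc.prems(1) by (auto simp: covector_chain_def)
  then have "V j x = Zero" using Suc.prems(2) by (auto simp: sv_less_def sv_le_def)
  then show ?case using Suc by (cases "i = Suc j") auto
qed simp

lemma sv_less_zero_part_psubset:
  assumes "V \<in> signvecs E" "W \<in> signvecs E" "sv_less V W"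
  shows "zero_part E W \<subset> zero_part E V"
proof -
  have le: "\<forall>e. V e = Zero \<or> V e = W e" and "V \<noteq> W"
    using assms(3) by (auto simp: sv_less_def sv_le_def)
  then obtain x where "V x = Zero" "W x \<noteq> Zero" by (metis ext)
  moreover have "x \<in> E" using \<open>W x \<noteq> Zero\<close> assms(2) by (auto simp: signvecs_def)
  moreover have "zero_part E W \<subseteq> zero_part E V" using le unfolding zero_part_def by force
  ultimately show ?thesis unfolding zero_part_def by blast
qed

lemma covector_chain_zero_part_psubset:
  assumes "C \<subseteq> signvecs E" "covector_chain C m V" "i < m"
  shows "zero_part E (V (Suc i)) \<subset> zero_part E (V i)"
proof (rule sv_less_zero_part_psubset)
  have "V i \<in> covectors C" "V (Suc i) \<in> covectors C"
    using assms(2,3) by (simp_all add: covector_chain_def)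
  then show "V i \<in> signvecs E" "V (Suc i) \<in> signvecs E"
    using covectors_subset_signvecs[OF assms(1)] by blast+
  show "sv_less (V i) (V (Suc i))" using assms(2,3) by (simp add: covector_chain_def)
qed

lemma covector_chain_step_witness:
  assumes "C \<subseteq> signvecs E" "covector_chain C m V" "i < m"
  shows "\<exists>g\<in>E. V i g = Zero \<and> V (Suc i) g \<noteq> Zero"
proof -
  obtain g where "g \<in> zero_part E (V i)" "g \<notin> zero_part E (V (Suc i))"
    using covector_chain_zero_part_psubset[OF assms] by blast
  then show ?thesis unfolding zero_part_def by blast
qed

lemma covector_chain_card_zero_part_decreasing:
  assumes "finite E" "C \<subseteq> signvecs E" "covector_chain C m V" "j \<le> i" "i \<le> m"
  shows "card (zero_part E (V i)) + i \<le> card (zero_part E (V j)) + j"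
  using assms(4,5)
proof (induction i)
  case (Suc i)
  show ?case
  proof (cases "j = Suc i")
    case False
    have "zero_part E (V (Suc i)) \<subset> zero_part E (V i)"
      using covector_chain_zero_part_psubset[OF assms(2,3)] Suc.prems by simp
    then have "card (zero_part E (V (Suc i))) < card (zero_part E (V i))"
      using assms(1) by (simp add: psubset_card_mono finite_zero_part)
    then show ?thesis using Suc False by simp
  qed simp
qed simp

lemma covector_chain_length_le_card:
  assumes "finite E" "C \<subseteq> signvecs E" "covector_chain C m V"
  shows "m \<le> card E"
proof -
  have "zero_part E (V 0) = E" using assms(3) by (auto simp: covector_chain_def zero_part_def zerovec_def)
  then show ?thesis using covector_chain_card_zero_part_decreasing[OF assms, of 0 m] by simp
qed

lemma covector_chain_length_le_uniform:
  assumes "finite E" "C \<subseteq> signvecs E" "covector_chain C m V"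
    and "\<forall>X\<in>C. card (zero_part E X) = s"
  shows "m \<le> s + 1"
proof (cases m)
  case (Suc m')
  have "V 1 \<in> covectors C" "V 1 \<noteq> zerovec"
    using assms(3) Suc by (auto simp: covector_chain_def sv_less_def)
  then obtain X where X: "X \<in> C" "\<forall>x. V 1 x = Zero \<longrightarrow> X x = Zero"
    using covector_zeros_in_cocircuit by blast
  then have "zero_part E (V 1) \<subseteq> zero_part E X" by (auto simp: zero_part_def)
  then have "card (zero_part E (V 1)) \<le> s"
    using assms(1,4) X(1) by (metis card_mono finite_zero_part)
  then show ?thesis
    using covector_chain_card_zero_part_decreasing[OF assms(1-3), of 1 m] Suc by simp
qed simp

lemma covector_chain_om_rank:
  assumes "finite E" "C \<subseteq> signvecs E"
  shows "\<exists>V. covector_chain C (om_rank C) V"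
  unfolding om_rank_eq_Greatest_chain
  by (rule GreatestI_nat[of _ 0 "card E"])
    (use covector_chain_zerovec covector_chain_length_le_card[OF assms] in blast)+

lemma om_rank_eqI:
  assumes "covector_chain C m V" "\<And>m' V'. covector_chain C m' V' \<Longrightarrow> m' \<le> m"
  shows "om_rank C = m"
  unfolding om_rank_eq_Greatest_chain by (rule Greatest_equality) (use assms in blast)+

section \<open>Contraction\<close>

text \<open>Only the cocircuits of \<open>M/e\<close> are modelled; its ground set is \<open>E - {e}\<close>.\<close>

definition contraction :: "'a signvec set \<Rightarrow> 'a \<Rightarrow> 'a signvec set" where
  "contraction C e = {X\<in>C. X e = Zero}"

lemma covector_in_contraction:
  assumes "V \<in> covectors C" "V e = Zero"
  shows "V \<in> covectors (contraction C e)"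
proof (cases "V = zerovec")
  case False
  then obtain Xs where Xs: "V = foldr comp Xs zerovec" "Xs \<noteq> []" "set Xs \<subseteq> C"
    using assms(1) by (auto simp: covectors_def)
  have "set Xs \<subseteq> contraction C e"
    using Xs assms(2) foldr_comp_Zero_imp[of _ Xs e] by (auto simp: contraction_def)
  then have "\<exists>Ys. V = foldr comp Ys zerovec \<and> Ys \<noteq> [] \<and> set Ys \<subseteq> contraction C e"
    using Xs(1,2) by blast
  then show ?thesis unfolding covectors_def by simp
qed (simp add: zerovec_in_covectors)

lemma covector_of_contraction_Zero:
  assumes "V \<in> covectors (contraction C e)"
  shows "V e = Zero"
proof -
  have "set Xs \<subseteq> contraction C e \<Longrightarrow> foldr comp Xs zerovec e = Zero" for Xs
    by (induction Xs) (auto simp: contraction_def comp_def zerovec_def)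
  then show ?thesis using assms by (auto simp: covectors_def zerovec_def)
qed

lemma covector_chain_contraction:
  assumes "covector_chain C m V" "V m e = Zero"
  shows "covector_chain (contraction C e) m V"
  using assms covector_chain_Zero_mono[OF assms(1) order_refl assms(2)]
  unfolding covector_chain_def by (auto intro!: covector_in_contraction)

lemma oriented_matroid_contraction:
  assumes "oriented_matroid E C"
  shows "oriented_matroid (E - {e}) (contraction C e)"
proof -
  note F = oriented_matroidD[OF assms]
  have elim: "\<exists>Z\<in>contraction C e. pos_part Z \<subseteq> (pos_part X \<union> pos_part Y) - {f} \<and>
                neg_part Z \<subseteq> (neg_part X \<union> neg_part Y) - {f}"
    if XY: "X \<in> contraction C e" "Y \<in> contraction C e" and "X \<noteq> negv Y" "f \<in> sep X Y"
    for X Y f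
  proof -
    have "X \<in> C" "Y \<in> C" using XY by (auto simp: contraction_def)
    then obtain Z where Z: "Z \<in> C" "pos_part Z \<subseteq> (pos_part X \<union> pos_part Y) - {f}"
      "neg_part Z \<subseteq> (neg_part X \<union> neg_part Y) - {f}"
      using F(6) \<open>X \<noteq> negv Y\<close> \<open>f \<in> sep X Y\<close> by blast
    have "X e = Zero" "Y e = Zero" using XY by (auto simp: contraction_def)
    then have "Z e = Zero" using Z(2,3) by (auto simp: Zero_iff_notin_parts)
    then show ?thesis using Z by (auto simp: contraction_def)
  qed
  show ?thesis
    unfolding oriented_matroid_def using F(1-5) elim
    by (auto simp: contraction_def signvecs_def)
qed

lemma uniform_contraction:
  assumes "\<forall>X\<in>C. card (zero_part E X) = s" "e \<in> E" "finite E"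
  shows "\<forall>X\<in>contraction C e. card (zero_part (E - {e}) X) = s - 1"
proof
  fix X assume "X \<in> contraction C e"
  then have "X \<in> C" "e \<in> zero_part E X" using assms(2) by (auto simp: contraction_def zero_part_def)
  then show "card (zero_part (E - {e}) X) = s - 1"
    using assms(1,3) by (simp add: zero_part_Diff_singleton finite_zero_part)
qed

section \<open>Zero sets of cocircuits in uniform oriented matroids\<close>

text \<open>Eliminating \<open>f\<close> between \<open>X1\<close> and \<open>\<plusminus>X2\<close> gives a cocircuit vanishing at \<open>f\<close> and at
  the common zeros of \<open>X1\<close> and \<open>X2\<close>; by uniformity these are all of its zeros.\<close>

lemma cocircuit_elimination_zero_set:
  assumes om: "oriented_matroid E C" and u: "\<forall>X\<in>C. card (zero_part E X) = s"
    and X1: "X1 \<in> C" and X2: "X2 \<in> C"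
    and K: "card (zero_part E X1 \<inter> zero_part E X2) + 1 = s"
    and f: "f \<in> E" "X1 f \<noteq> Zero" "X2 f \<noteq> Zero"
  shows "\<exists>Z\<in>C. zero_part E Z = insert f (zero_part E X1 \<inter> zero_part E X2)"
proof -
  note F = oriented_matroidD[OF om]
  let ?K = "zero_part E X1 \<inter> zero_part E X2"
  define Y where "Y = (if X2 f = X1 f then negv X2 else X2)"
  have Y: "Y \<in> C" using F(4) X2 by (simp add: Y_def)
  have zero_Y: "Y x = Zero \<longleftrightarrow> X2 x = Zero" for x by (simp add: Y_def)
  have "f \<in> sep X1 Y"
    using f by (cases "X1 f"; cases "X2 f") (auto simp: Y_def sep_iff negv_def)
  moreover have "X1 \<noteq> negv Y"
  proof
    assume "X1 = negv Y"
    then have "zero_part E X1 = zero_part E X2" by (auto simp: zero_part_def zero_Y)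
    moreover have "card (zero_part E X1) = s" using u X1 by blast
    ultimately show False using K by simp
  qed
  ultimately obtain Z where Z: "Z \<in> C" "pos_part Z \<subseteq> (pos_part X1 \<union> pos_part Y) - {f}"
      "neg_part Z \<subseteq> (neg_part X1 \<union> neg_part Y) - {f}"
    using F(6)[OF X1 Y] by blast
  have "Z x = Zero" if "x = f \<or> (X1 x = Zero \<and> Y x = Zero)" for x
    using that Z(2,3) by (auto simp: Zero_iff_notin_parts)
  then have "insert f ?K \<subseteq> zero_part E Z" using f(1) by (auto simp: zero_part_def zero_Y)
  moreover have "card (insert f ?K) = card (zero_part E Z)"
    using K f F(1) u Z(1) by (simp add: finite_zero_part zero_part_def)
  ultimately show ?thesis using Z(1) F(1) by (metis card_subset_eq finite_zero_part)
qed

text \<open>If all \<open>s\<close>-sets through \<open>g\<close> are zero sets, exchanging one element at a time towards the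
  zero set of a cocircuit not vanishing at \<open>g\<close> reaches all \<open>s\<close>-sets.\<close>

lemma zero_sets_exchange:
  assumes om: "oriented_matroid E C" and u: "\<forall>X\<in>C. card (zero_part E X) = s"
    and g: "g \<in> E" and X0: "X0 \<in> C" "X0 g \<noteq> Zero"
    and through_g: "\<And>H. H \<subseteq> E \<Longrightarrow> card H = s \<Longrightarrow> g \<in> H \<Longrightarrow> \<exists>X\<in>C. zero_part E X = H"
    and H: "H \<subseteq> E" "card H = s"
  shows "\<exists>X\<in>C. zero_part E X = H"
proof -
  note F = oriented_matroidD[OF om]
  define Z0 where "Z0 = zero_part E X0"
  have Z0: "g \<notin> Z0" "Z0 \<subseteq> E" "card Z0 = s" "finite Z0"
    using X0 u F(1) by (auto simp: Z0_def zero_part_def)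
  have "\<exists>X\<in>C. zero_part E X = H" if "H \<subseteq> E" "card H = s" "g \<notin> H" "card (H - Z0) = d" for d H
    using that
  proof (induction d arbitrary: H)
    case 0
    then have "H \<subseteq> Z0" using F(1) finite_subset by fastforce
    then have "H = Z0" using Z0 0 by (simp add: card_subset_eq)
    then show ?case using X0(1) Z0_def by blast
  next
    case (Suc d)
    have fin: "finite H" using Suc.prems(1) F(1) finite_subset by blast
    obtain h where h: "h \<in> H" "h \<notin> Z0" using Suc.prems(4) by (metis Diff_eq_empty_iff card.empty nat.distinct(1) subsetI)
    obtain h' where h': "h' \<in> Z0" "h' \<notin> H"
      using card_subset_eq[OF fin, of Z0] Suc.prems(2) Z0(3) h by blast
    define K where "K = H - {h}"
    have K: "card K = s - 1" "g \<notin> K" "h' \<notin> K" "K \<subseteq> E" "h \<in> E"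
      using Suc.prems h h' by (auto simp: K_def)
    have "s \<ge> 1" using Suc.prems(2) h fin by (metis card_0_eq empty_iff less_one not_le)
    obtain X1 where X1: "X1 \<in> C" "zero_part E X1 = insert h' K"
    proof (rule Suc.IH[THEN bexE])
      have "insert h' K - Z0 = (H - Z0) - {h}" using h h' by (auto simp: K_def)
      then show "card (insert h' K - Z0) = d" using Suc.prems(4) h fin by simp
    qed (use K h' Z0 \<open>s \<ge> 1\<close> fin in \<open>auto simp: K_def card_insert_if\<close>)
    obtain X2 where X2: "X2 \<in> C" "zero_part E X2 = insert g K"
      using through_g[of "insert g K"] K g \<open>s \<ge> 1\<close> fin by (auto simp: K_def)
    have "zero_part E X1 \<inter> zero_part E X2 = K"
      using X1(2) X2(2) K h' Z0(1) by auto
    moreover have "X1 h \<noteq> Zero" "X2 h \<noteq> Zero"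
      using X1(2) X2(2) K h h' Z0(1) Suc.prems(3) by (auto simp: zero_part_def K_def)
    ultimately obtain Z where "Z \<in> C" "zero_part E Z = insert h K"
      using cocircuit_elimination_zero_set[OF om u X1(1) X2(1) _ K(5)] K(1) \<open>s \<ge> 1\<close> by auto
    moreover have "insert h K = H" using h by (auto simp: K_def)
    ultimately show ?case by blast
  qed
  then show ?thesis using through_g H by (cases "g \<in> H") auto
qed

lemma cocircuit_with_zero_set:
  assumes "oriented_matroid E C" "\<forall>X\<in>C. card (zero_part E X) = s" "covector_chain C (Suc s) V"
    and "H \<subseteq> E" "card H = s"
  shows "\<exists>X\<in>C. zero_part E X = H"
  using assms
proof (induction s arbitrary: E C V H)
  case 0
  note F = oriented_matroidD[OF "0.prems"(1)]
  have "V 1 \<in> covectors C" "V 1 \<noteq> zerovec"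
    using "0.prems"(3) by (auto simp: covector_chain_def sv_less_def)
  then obtain X where "X \<in> C" using covector_nonzero_cocircuit by (metis ext zerovec_def)
  moreover have "zero_part E X = {}"
    using "0.prems"(2) \<open>X \<in> C\<close> F(1) by (metis card_0_eq finite_zero_part)
  moreover have "H = {}" using "0.prems"(4,5) F(1) by (metis card_0_eq finite_subset)
  ultimately show ?case by blast
next
  case (Suc s)
  note F = oriented_matroidD[OF Suc.prems(1)]
  obtain g where g: "g \<in> E" "V (Suc s) g = Zero" "V (Suc (Suc s)) g \<noteq> Zero"
    using covector_chain_step_witness[OF F(2) Suc.prems(3)] by blast
  obtain X0 where X0: "X0 \<in> C" "X0 g \<noteq> Zero"
    using covector_nonzero_cocircuit[of "V (Suc (Suc s))" C g] g(3) Suc.prems(3) by (auto simp: covector_chain_def)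
  have through_g: "\<exists>X\<in>C. zero_part E X = H'" if H': "H' \<subseteq> E" "card H' = Suc s" "g \<in> H'" for H'
  proof -
    have "covector_chain (contraction C g) (Suc s) V"
      using covector_chain_contraction[OF covector_chain_prefix[OF Suc.prems(3), of "Suc s"] g(2)]
      by simp
    moreover have "\<forall>X\<in>contraction C g. card (zero_part (E - {g}) X) = s"
      using uniform_contraction[OF Suc.prems(2) g(1) F(1)] by simp
    moreover have "H' - {g} \<subseteq> E - {g}" "card (H' - {g}) = s" using H' by auto
    ultimately obtain X where X: "X \<in> contraction C g" "zero_part (E - {g}) X = H' - {g}"
      using Suc.IH[OF oriented_matroid_contraction[OF Suc.prems(1)]] by blast
    then have "zero_part E X = H'"
      using H'(3) g(1) by (auto simp: contraction_def zero_part_Diff_singleton zero_part_def)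
    then show ?thesis using X(1) by (auto simp: contraction_def)
  qed
  show ?case by (rule zero_sets_exchange[OF Suc.prems(1,2) g(1) X0 through_g Suc.prems(4,5)])
qed

section \<open>The rank of a contraction\<close>

lemma contraction_chain_step:
  assumes om: "oriented_matroid E C" and u: "\<forall>X\<in>C. card (zero_part E X) = s"
    and ch: "covector_chain C (Suc s) V" and e: "e \<in> E"
    and W: "W \<in> covectors (contraction C e)" and t: "1 \<le> t" "t \<le> s"
    and big: "t < card (zero_part E W)"
  shows "\<exists>Z\<in>contraction C e. sv_less W (comp W Z) \<and> t \<le> card (zero_part E (comp W Z))"
proof -
  note F = oriented_matroidD[OF om]
  have e_zero: "e \<in> zero_part E W" using covector_of_contraction_Zero[OF W] e by (simp add: zero_part_def)
  then have "card (zero_part E W - {e}) = card (zero_part E W) - 1"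
    using F(1) by (simp add: finite_zero_part)
  then have "card (zero_part E W - {e}) \<noteq> 0" using big t(1) by linarith
  then obtain g where g: "g \<in> zero_part E W" "g \<noteq> e" by (metis DiffE card.empty ex_in_conv singletonI)
  have "card (zero_part E W - {g}) = card (zero_part E W) - 1"
    using g(1) F(1) by (simp add: finite_zero_part)
  then have "t \<le> card (zero_part E W - {g})" using big by linarith
  moreover have "card {e} \<le> t" "{e} \<subseteq> zero_part E W - {g}" "finite (zero_part E W - {g})"
    using t(1) e_zero g(2) F(1) by (simp_all add: finite_zero_part)
  ultimately obtain Q where Q: "{e} \<subseteq> Q" "Q \<subseteq> zero_part E W - {g}" "card Q = t"
    using exists_subset_between[of "{e}" t "zero_part E W - {g}"] by blast
  have "Suc s \<le> card E" using covector_chain_length_le_card[OF F(1,2) ch] .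
  then have "s \<le> card (E - {g})" using g F(1) by (auto simp: zero_part_def)
  moreover have "Q \<subseteq> E - {g}" using Q(2) by (auto simp: zero_part_def)
  moreover have "card Q \<le> s" "finite (E - {g})" using Q(3) t(2) F(1) by simp_all
  ultimately obtain H where H: "Q \<subseteq> H" "H \<subseteq> E - {g}" "card H = s"
    using exists_subset_between[of Q s "E - {g}"] by blast
  obtain Z where Z: "Z \<in> C" "zero_part E Z = H"
    using cocircuit_with_zero_set[OF om u ch, of H] H(2,3) by auto
  have "Z e = Zero" "Z g \<noteq> Zero" "W g = Zero"
    using Z(2) H Q(1) g by (auto simp: zero_part_def)
  then have "Z \<in> contraction C e" "sv_less W (comp W Z)"
    using Z(1) sv_less_comp by (auto simp: contraction_def)
  moreover have "Q \<subseteq> zero_part E (comp W Z)"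
    using Q(2) H(1) Z(2) by (auto simp: zero_part_def comp_def)
  then have "t \<le> card (zero_part E (comp W Z))"
    using Q(3) F(1) by (metis card_mono finite_zero_part)
  ultimately show ?thesis by blast
qed

lemma contraction_chain_exists:
  assumes om: "oriented_matroid E C" and u: "\<forall>X\<in>C. card (zero_part E X) = s"
    and ch: "covector_chain C (Suc s) V" and e: "e \<in> E" and "m \<le> s"
  shows "\<exists>W. covector_chain (contraction C e) m W \<and> s < card (zero_part E (W m)) + m"
  using \<open>m \<le> s\<close>
proof (induction m)
  case 0
  have "zero_part E zerovec = E" by (auto simp: zero_part_def zerovec_def)
  then show ?case
    using covector_chain_zerovec covector_chain_length_le_card[OF oriented_matroidD(1,2)[OF om] ch]
    by fastforce
next
  case (Suc m)
  then obtain W where W: "covector_chain (contraction C e) m W" "s < card (zero_part E (W m)) + m"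
    by auto
  have Wm: "W m \<in> covectors (contraction C e)" using W(1) by (simp add: covector_chain_def)
  have "1 \<le> s - m" "s - m \<le> s" "s - m < card (zero_part E (W m))"
    using W(2) Suc.prems by auto
  then obtain Z where Z: "Z \<in> contraction C e" "sv_less (W m) (comp (W m) Z)"
      "s - m \<le> card (zero_part E (comp (W m) Z))"
    using contraction_chain_step[OF om u ch e Wm] by blast
  define W' where "W' = W(Suc m := comp (W m) Z)"
  have "covector_chain (contraction C e) (Suc m) W'"
    unfolding W'_def by (rule covector_chain_extend[OF W(1) covectors_comp_cocircuit[OF Wm Z(1)] Z(2)])
  moreover have "s < card (zero_part E (W' (Suc m))) + Suc m"
    using Z(3) Suc.prems by (simp add: W'_def)
  ultimately show ?case by (intro exI[of _ W'] conjI)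
qed

lemma om_rank_contraction:
  assumes om: "oriented_matroid E C" and u: "\<forall>X\<in>C. card (zero_part E X) = s"
    and ch: "covector_chain C (Suc s) V" and e: "e \<in> E" and s: "1 \<le> s"
  shows "om_rank (contraction C e) = s"
proof -
  note F = oriented_matroidD[OF oriented_matroid_contraction[OF om, of e]]
  obtain W where W: "covector_chain (contraction C e) s W"
    using contraction_chain_exists[OF om u ch e] by blast
  show ?thesis
  proof (rule om_rank_eqI[OF W])
    fix m W' assume "covector_chain (contraction C e) m W'"
    then have "m \<le> s - 1 + 1"
      by (rule covector_chain_length_le_uniform[OF F(1,2) _
            uniform_contraction[OF u e oriented_matroidD(1)[OF om]]])
    then show "m \<le> s" using s by simp
  qed
qed

lemma uniform_om_contraction:
  assumes om: "oriented_matroid E C" and u: "uniform_om E C" and r: "2 \<le> om_rank C"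
    and e: "e \<in> E"
  shows "om_rank (contraction C e) = om_rank C - 1"
    and "uniform_om (E - {e}) (contraction C e)"
proof -
  note F = oriented_matroidD[OF om]
  have u': "\<forall>X\<in>C. card (zero_part E X) = om_rank C - 1" using u by (simp add: uniform_om_def)
  have "Suc (om_rank C - 1) = om_rank C" using r by simp
  then obtain V where "covector_chain C (Suc (om_rank C - 1)) V"
    using covector_chain_om_rank[OF F(1,2)] by metis
  then show rank: "om_rank (contraction C e) = om_rank C - 1"
    using om_rank_contraction[OF om u' _ e] r by simp
  show "uniform_om (E - {e}) (contraction C e)"
    using uniform_contraction[OF u' e F(1)] by (simp add: uniform_om_def rank)
qed

section \<open>Distances in the cocircuit graph\<close>

lemma cg_walk_map:
  assumes "cg_walk E' C' n X Y" "\<And>X. X \<in> C' \<Longrightarrow> g X \<in> C"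
    and "\<And>X Y. cg_adj E' C' X Y \<Longrightarrow> cg_adj E C (g X) (g Y)"
  shows "cg_walk E C n (g X) (g Y)"
proof -
  obtain p where "p 0 = X" "p n = Y" "\<forall>i\<le>n. p i \<in> C'" "\<forall>i<n. cg_adj E' C' (p i) (p (Suc i))"
    using assms(1) by (auto simp: cg_walk_def)
  then show ?thesis using assms(2,3) unfolding cg_walk_def by (intro exI[of _ "g \<circ> p"]) auto
qed

lemma cg_dist_map:
  assumes "\<And>X. X \<in> C' \<Longrightarrow> g X \<in> C" "\<And>X Y. cg_adj E' C' X Y \<Longrightarrow> cg_adj E C (g X) (g Y)"
  shows "cg_dist E C (g X) (g Y) \<le> cg_dist E' C' X Y"
  unfolding cg_dist_def by (rule INF_superset_mono) (use cg_walk_map[OF _ assms] in auto)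

lemma cg_dist_le_cg_diam: "X \<in> C \<Longrightarrow> Y \<in> C \<Longrightarrow> cg_dist E C X Y \<le> cg_diam E C"
  unfolding cg_diam_def by (rule SUP_upper2, assumption, rule SUP_upper)

text \<open>Both adjacency thresholds are truncated differences; \<open>3 \<le> om_rank C\<close> makes them differ by
  exactly one, which the common zero \<open>e\<close> makes up.\<close>

lemma cg_adj_of_contraction:
  assumes "cg_adj (E - {e}) (contraction C e) X Y" "om_rank (contraction C e) + 1 = om_rank C"
    and "3 \<le> om_rank C" "e \<in> E" "finite E"
  shows "cg_adj E C X Y"
proof -
  have X: "X \<in> C" "X e = Zero" and Y: "Y \<in> C" "Y e = Zero"
    using assms(1) by (auto simp: cg_adj_def contraction_def)
  then have "zero_part E X \<inter> zero_part E Y = insert e (zero_part (E - {e}) X \<inter> zero_part (E - {e}) Y)"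
    using assms(4) by (auto simp: zero_part_def)
  then have "card (zero_part E X \<inter> zero_part E Y) = card (zero_part (E - {e}) X \<inter> zero_part (E - {e}) Y) + 1"
    using assms(5) by (simp add: zero_part_def)
  then show ?thesis using assms X Y by (auto simp: cg_adj_def)
qed

lemma cg_dist_le_cg_diam_contraction:
  assumes "X \<in> contraction C e" "Y \<in> contraction C e" "om_rank (contraction C e) + 1 = om_rank C"
    and "3 \<le> om_rank C" "e \<in> E" "finite E"
  shows "cg_dist E C X Y \<le> cg_diam (E - {e}) (contraction C e)"
proof -
  have "cg_dist E C X Y \<le> cg_dist (E - {e}) (contraction C e) X Y"
    using cg_dist_map[of "contraction C e" "\<lambda>X. X" C, OF _ cg_adj_of_contraction[OF _ assms(3-6)]]
    by (auto simp: contraction_def)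
  also have "\<dots> \<le> cg_diam (E - {e}) (contraction C e)" by (rule cg_dist_le_cg_diam[OF assms(1,2)])
  finally show ?thesis .
qed

lemma cocircuits_common_zero:
  assumes "finite E" "card (zero_part E X) + card (zero_part E Y) > card E"
  shows "\<exists>e\<in>E. X e = Zero \<and> Y e = Zero"
proof -
  have "card (zero_part E X \<union> zero_part E Y) \<le> card E"
    using assms(1) by (intro card_mono) (auto simp: zero_part_def)
  then have "zero_part E X \<inter> zero_part E Y \<noteq> {}"
    using assms card_Un_Int[of "zero_part E X" "zero_part E Y"] by (auto simp: finite_zero_part)
  then show ?thesis by (auto simp: zero_part_def)
qed

lemma cg_diam_le_by_rank_reduction:
  fixes B :: enat
  assumes small: "\<And>(E::'a set) C r. oriented_matroid E C \<Longrightarrow> uniform_om E C \<Longrightarrow> om_rank C = r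
     \<Longrightarrow> 2 \<le> r \<Longrightarrow> r \<le> k + 2 \<Longrightarrow> card E = r + k \<Longrightarrow> cg_diam E C \<le> B"
  shows "oriented_matroid (E::'a set) C \<Longrightarrow> uniform_om E C \<Longrightarrow> om_rank C = r \<Longrightarrow> 2 \<le> r
     \<Longrightarrow> card E = r + k \<Longrightarrow> cg_diam E C \<le> B"
proof (induction r arbitrary: E C rule: less_induct)
  case (less r)
  show ?case
  proof (cases "r \<le> k + 2")
    case True then show ?thesis using small less.prems by blast
  next
    case False
    note om = less.prems(1) and F = oriented_matroidD[OF less.prems(1)]
    show ?thesis unfolding cg_diam_def
    proof (intro SUP_least)
      fix X Y assume X: "X \<in> C" and Y: "Y \<in> C"
      have "card (zero_part E X) = r - 1" "card (zero_part E Y) = r - 1"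
        using less.prems(2,3) X Y by (auto simp: uniform_om_def)
      then have "card E < card (zero_part E X) + card (zero_part E Y)"
        using False less.prems(5) by simp
      then obtain e where e: "e \<in> E" "X e = Zero" "Y e = Zero"
        using cocircuits_common_zero[OF F(1)] by blast
      note contr = uniform_om_contraction[OF om less.prems(2) _ e(1)]
      have "cg_diam (E - {e}) (contraction C e) \<le> B"
        using less.IH[of "r - 1", OF _ oriented_matroid_contraction[OF om]] contr
          less.prems(3,5) False e(1) F(1) by simp
      moreover have "cg_dist E C X Y \<le> cg_diam (E - {e}) (contraction C e)"
        using cg_dist_le_cg_diam_contraction[of X C e Y E] X Y e contr less.prems(3) False F(1)
        by (simp add: contraction_def)
      ultimately show "cg_dist E C X Y \<le> B" by simp
    qed
  qed
qed

section \<open>Relabelling the ground set\<close>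

locale relabelling =
  fixes h :: "'b \<Rightarrow> 'a" and A :: "'b set" and E :: "'a set"
  assumes bij: "bij_betw h A E"
begin

definition pull :: "'a signvec \<Rightarrow> 'b signvec" where
  "pull X = (\<lambda>i. if i \<in> A then X (h i) else Zero)"

lemma image_h: "h ` A = E"
  using bij by (simp add: bij_betw_def)

lemma pull_signvecs: "pull X \<in> signvecs A"
  by (simp add: pull_def signvecs_def)

lemma inj_on_pull: "inj_on pull (signvecs E)"
proof (rule inj_onI, rule ext)
  fix X Y x assume XY: "X \<in> signvecs E" "Y \<in> signvecs E" "pull X = pull Y"
  show "X x = Y x"
  proof (cases "x \<in> E")
    case True
    then obtain i where "i \<in> A" "h i = x" using image_h by blast
    then show ?thesis using fun_cong[OF XY(3), of i] by (simp add: pull_def)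
  qed (use XY(1,2) in \<open>simp add: signvecs_def\<close>)
qed

lemma pull_zerovec [simp]: "pull zerovec = zerovec"
  by (auto simp: pull_def zerovec_def)

lemma pull_negv: "pull (negv X) = negv (pull X)"
  by (auto simp: pull_def negv_def)

lemma pull_foldr_comp: "pull (foldr comp Xs zerovec) = foldr comp (map pull Xs) zerovec"
proof (induction Xs)
  case (Cons X Xs)
  have "pull (comp X Y) = comp (pull X) (pull Y)" for Y by (auto simp: pull_def comp_def)
  then show ?case using Cons by simp
qed simp

lemma pos_part_pull: "pos_part (pull X) = A \<inter> h -` pos_part X"
  and neg_part_pull: "neg_part (pull X) = A \<inter> h -` neg_part X"
  and supp_pull: "supp (pull X) = A \<inter> h -` supp X"
  and sep_pull: "sep (pull X) (pull Y) = A \<inter> h -` sep X Y"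
  by (auto simp: pull_def pos_part_def neg_part_def supp_def sep_def)

lemma subset_E_iff_pull:
  assumes "S \<subseteq> E" "T \<subseteq> E"
  shows "A \<inter> h -` S \<subseteq> A \<inter> h -` T \<longleftrightarrow> S \<subseteq> T"
  using assms image_h by blast

lemma supp_subset_signvecs: "X \<in> signvecs E \<Longrightarrow> supp X \<subseteq> E"
  by (auto simp: signvecs_def supp_iff)

lemma covectors_pull: "covectors (pull ` C) = pull ` covectors C"
proof -
  have "{foldr comp Ys zerovec | Ys. Ys \<noteq> [] \<and> set Ys \<subseteq> pull ` C}
      = pull ` {foldr comp Xs zerovec | Xs. Xs \<noteq> [] \<and> set Xs \<subseteq> C}"
  proof (intro equalityI subsetI)
    fix W assume "W \<in> {foldr comp Ys zerovec | Ys. Ys \<noteq> [] \<and> set Ys \<subseteq> pull ` C}"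
    then obtain Ys where Ys: "W = foldr comp Ys zerovec" "Ys \<noteq> []" "Ys \<in> lists (pull ` C)"
      by auto
    then obtain Xs where Xs: "Ys = map pull Xs" "Xs \<in> lists C" by (auto simp: lists_image)
    then have "W = pull (foldr comp Xs zerovec)" using Ys(1) by (simp add: pull_foldr_comp)
    moreover have "foldr comp Xs zerovec \<in> {foldr comp Xs zerovec | Xs. Xs \<noteq> [] \<and> set Xs \<subseteq> C}"
      using Xs Ys(2) by auto
    ultimately show "W \<in> pull ` {foldr comp Xs zerovec | Xs. Xs \<noteq> [] \<and> set Xs \<subseteq> C}"
      by blast
  next
    fix W assume "W \<in> pull ` {foldr comp Xs zerovec | Xs. Xs \<noteq> [] \<and> set Xs \<subseteq> C}"
    then obtain Xs where "W = pull (foldr comp Xs zerovec)" "Xs \<noteq> []" "set Xs \<subseteq> C" by auto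
    then show "W \<in> {foldr comp Ys zerovec | Ys. Ys \<noteq> [] \<and> set Ys \<subseteq> pull ` C}"
      by (auto simp: pull_foldr_comp intro!: exI[of _ "map pull Xs"] imageI)
  qed
  then show ?thesis by (simp add: covectors_def)
qed

lemma sv_less_pull_iff:
  assumes "V \<in> signvecs E" "W \<in> signvecs E"
  shows "sv_less (pull V) (pull W) \<longleftrightarrow> sv_less V W"
proof -
  have "sv_le (pull V) (pull W) \<longleftrightarrow> (\<forall>i\<in>A. V (h i) = Zero \<or> V (h i) = W (h i))"
    by (auto simp: sv_le_def pull_def)
  also have "\<dots> \<longleftrightarrow> (\<forall>x\<in>E. V x = Zero \<or> V x = W x)"
    unfolding image_h[symmetric] by simp
  also have "\<dots> \<longleftrightarrow> sv_le V W"
    using assms by (auto simp: sv_le_def signvecs_def)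
  finally have "sv_le (pull V) (pull W) \<longleftrightarrow> sv_le V W" .
  then show ?thesis using inj_on_pull assms by (auto simp: sv_less_def inj_on_eq_iff)
qed

lemma covector_chain_pull_iff:
  assumes "C \<subseteq> signvecs E"
  shows "(\<exists>V'. covector_chain (pull ` C) m V') \<longleftrightarrow> (\<exists>V. covector_chain C m V)"
proof
  have covE: "covectors C \<subseteq> signvecs E" using covectors_subset_signvecs[OF assms] .
  assume "\<exists>V'. covector_chain (pull ` C) m V'"
  then obtain V' where V': "covector_chain (pull ` C) m V'" by blast
  define V where "V i = inv_into (covectors C) pull (V' i)" for i
  have V: "V i \<in> covectors C" "pull (V i) = V' i" if "i \<le> m" for i
    using V' that by (auto simp: V_def covector_chain_def covectors_pull inv_into_into f_inv_into_f)
  have "pull (V 0) = pull zerovec" using V[of 0] V' by (simp add: covector_chain_def)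
  then have "V 0 = zerovec"
    using inj_onD[OF inj_on_pull] V[of 0] covE zerovec_in_covectors by blast
  moreover have "sv_less (V i) (V (Suc i))" if "i < m" for i
  proof -
    have "sv_less (pull (V i)) (pull (V (Suc i)))"
      using V[of i] V[of "Suc i"] V' that by (simp add: covector_chain_def)
    moreover have "V i \<in> signvecs E" "V (Suc i) \<in> signvecs E"
      using V[of i] V[of "Suc i"] covE that by auto
    ultimately show ?thesis using sv_less_pull_iff by blast
  qed
  ultimately show "\<exists>V. covector_chain C m V" using V by (auto simp: covector_chain_def)
next
  assume "\<exists>V. covector_chain C m V"
  then obtain V where V: "covector_chain C m V" by blast
  have "covector_chain (pull ` C) m (pull \<circ> V)"
    using V sv_less_pull_iff covectors_subset_signvecs[OF assms]
    by (auto simp: covector_chain_def covectors_pull subset_iff)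
  then show "\<exists>V'. covector_chain (pull ` C) m V'" by blast
qed

lemma om_rank_pull: "C \<subseteq> signvecs E \<Longrightarrow> om_rank (pull ` C) = om_rank C"
  unfolding om_rank_eq_Greatest_chain by (simp add: covector_chain_pull_iff)

lemma card_zero_part_pull_Int:
  "card (zero_part A (pull X) \<inter> zero_part A (pull Y)) = card (zero_part E X \<inter> zero_part E Y)"
proof -
  have "bij_betw h (zero_part A (pull X) \<inter> zero_part A (pull Y)) (zero_part E X \<inter> zero_part E Y)"
    by (rule bij_betw_subset[OF bij]) (use image_h in \<open>auto simp: zero_part_def pull_def\<close>)
  then show ?thesis by (rule bij_betw_same_card)
qed

lemma card_zero_part_pull: "card (zero_part A (pull X)) = card (zero_part E X)"
  using card_zero_part_pull_Int[of X X] by simp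

lemma oriented_matroid_pull:
  assumes om: "oriented_matroid E C"
  shows "oriented_matroid A (pull ` C)"
proof -
  note F = oriented_matroidD[OF om]
  have CE: "X \<in> C \<Longrightarrow> X \<in> signvecs E" for X using F(2) by blast
  have "finite A" using F(1) bij bij_betw_finite by blast
  moreover have "zerovec \<notin> pull ` C"
  proof
    assume "zerovec \<in> pull ` C"
    then obtain X where "X \<in> C" "pull X = pull zerovec" by auto
    moreover have "zerovec \<in> signvecs E" by (simp add: signvecs_def zerovec_def)
    ultimately have "X = zerovec" using inj_onD[OF inj_on_pull] CE by blast
    then show False using F(3) \<open>X \<in> C\<close> by simp
  qed
  moreover have "X = Y \<or> X = negv Y"
    if mem: "X \<in> pull ` C" "Y \<in> pull ` C" and sub: "supp X \<subseteq> supp Y" for X Y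
  proof -
    obtain X0 Y0 where XY: "X0 \<in> C" "Y0 \<in> C" "X = pull X0" "Y = pull Y0" using mem by blast
    then have "A \<inter> h -` supp X0 \<subseteq> A \<inter> h -` supp Y0" using sub by (simp add: supp_pull)
    moreover have "supp X0 \<subseteq> E" "supp Y0 \<subseteq> E" using supp_subset_signvecs CE XY(1,2) by auto
    ultimately have "supp X0 \<subseteq> supp Y0" using subset_E_iff_pull by blast
    then have "X0 = Y0 \<or> X0 = negv Y0" using F(5) XY(1,2) by blast
    then show ?thesis using XY pull_negv by auto
  qed
  moreover have "\<exists>Z\<in>pull ` C. pos_part Z \<subseteq> (pos_part X \<union> pos_part Y) - {i} \<and>
                  neg_part Z \<subseteq> (neg_part X \<union> neg_part Y) - {i}"
    if mem: "X \<in> pull ` C" "Y \<in> pull ` C" and ne: "X \<noteq> negv Y" and i: "i \<in> sep X Y" for X Y i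
  proof -
    obtain X0 Y0 where XY: "X0 \<in> C" "Y0 \<in> C" "X = pull X0" "Y = pull Y0" using mem by blast
    then have "X0 \<noteq> negv Y0" "h i \<in> sep X0 Y0" "i \<in> A"
      using ne i pull_negv by (auto simp: sep_pull)
    then obtain Z where "Z \<in> C" "pos_part Z \<subseteq> (pos_part X0 \<union> pos_part Y0) - {h i}"
        "neg_part Z \<subseteq> (neg_part X0 \<union> neg_part Y0) - {h i}"
      using F(6)[OF XY(1,2)] by blast
    then show ?thesis using XY
      by (intro bexI[of _ "pull Z"]) (auto simp: pos_part_pull neg_part_pull)
  qed
  moreover have "pull ` C \<subseteq> signvecs A" using pull_signvecs by blast
  moreover have "\<forall>X\<in>pull ` C. negv X \<in> pull ` C" using F(4) by (auto simp: pull_negv[symmetric])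
  ultimately show ?thesis unfolding oriented_matroid_def by blast
qed

lemma uniform_om_pull:
  "C \<subseteq> signvecs E \<Longrightarrow> uniform_om E C \<Longrightarrow> uniform_om A (pull ` C)"
  by (simp add: uniform_om_def om_rank_pull card_zero_part_pull)

lemma cg_adj_of_pull:
  assumes "C \<subseteq> signvecs E" "X \<in> C" "Y \<in> C" "cg_adj A (pull ` C) (pull X) (pull Y)"
  shows "cg_adj E C X Y"
proof -
  have "sep X Y \<subseteq> E"
    using supp_subset_signvecs[of X] assms(1,2) by (auto simp: sep_def supp_def)
  then have "sep X Y = {}" using assms(4) image_h by (auto simp: cg_adj_def sep_pull)
  then show ?thesis
    using assms by (auto simp: cg_adj_def om_rank_pull card_zero_part_pull_Int)
qed

lemma cg_diam_le_pull:
  assumes "C \<subseteq> signvecs E"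
  shows "cg_diam E C \<le> cg_diam A (pull ` C)"
  unfolding cg_diam_def[of E C]
proof (intro SUP_least)
  fix X Y assume XY: "X \<in> C" "Y \<in> C"
  let ?g = "inv_into C pull"
  have g: "?g (pull Z) = Z" if "Z \<in> C" for Z
    using that assms inj_on_pull by (meson inj_on_subset inv_into_f_f)
  have "cg_dist E C (?g (pull X)) (?g (pull Y)) \<le> cg_dist A (pull ` C) (pull X) (pull Y)"
    by (rule cg_dist_map)
      (auto simp: inv_into_into g cg_adj_def[of A "pull ` C"] intro!: cg_adj_of_pull[OF assms])
  also have "\<dots> \<le> cg_diam A (pull ` C)" using XY by (simp add: cg_dist_le_cg_diam)
  finally show "cg_dist E C X Y \<le> cg_diam A (pull ` C)" using XY g by simp
qed

end

lemma uniform_om_nat_relabelling: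
  fixes E :: "'a set"
  assumes "oriented_matroid E C" "uniform_om E C"
  obtains E' :: "nat set" and C' where "oriented_matroid E' C'" "uniform_om E' C'"
    "card E' = card E" "om_rank C' = om_rank C" "cg_diam E C \<le> cg_diam E' C'"
proof -
  note F = oriented_matroidD[OF assms(1)]
  obtain h where "bij_betw h {0..<card E} E" using ex_bij_betw_nat_finite[OF F(1)] by blast
  then interpret relabelling h "{0..<card E}" E by unfold_locales
  show ?thesis
    by (rule that[of "{0..<card E}" "pull ` C"])
      (simp_all add: oriented_matroid_pull assms uniform_om_pull F(2) om_rank_pull cg_diam_le_pull)
qed

theorem theorem4p4:
  fixes E :: "'a set" and C :: "'a signvec set" and r k :: nat
  assumes "oriented_matroid E C"
    and "uniform_om E C"
    and "om_rank C = r"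
    and "r \<ge> 2"
    and "card E = r + k"
  shows "cg_diam E C \<le>
    Sup {cg_diam E' C' | (E' :: nat set) C' r'.
           2 \<le> r' \<and> r' \<le> k + 2 \<and> oriented_matroid E' C' \<and> uniform_om E' C' \<and>
           om_rank C' = r' \<and> card E' = r' + k}"
proof -
  let ?S = "{cg_diam E' C' | (E' :: nat set) C' r'.
           2 \<le> r' \<and> r' \<le> k + 2 \<and> oriented_matroid E' C' \<and> uniform_om E' C' \<and>
           om_rank C' = r' \<and> card E' = r' + k}"
  have small: "cg_diam E0 C0 \<le> Sup ?S"
    if M0: "oriented_matroid E0 C0" "uniform_om E0 C0" "om_rank C0 = r0" "2 \<le> r0" "r0 \<le> k + 2"
      "card E0 = r0 + k" for E0 :: "'a set" and C0 r0
  proof -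
    obtain E' :: "nat set" and C' where "oriented_matroid E' C'" "uniform_om E' C'"
      "card E' = card E0" "om_rank C' = om_rank C0" and le: "cg_diam E0 C0 \<le> cg_diam E' C'"
      using uniform_om_nat_relabelling[OF M0(1,2)] by blast
    then have "cg_diam E' C' \<in> ?S" using M0 by auto
    then show ?thesis using le by (meson Sup_upper order_trans)
  qed
  show ?thesis by (rule cg_diam_le_by_rank_reduction[OF small assms])
qed

end
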